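(* In a realisation of a local affine Gaudin model (setting below), let $\mathcal P(z)=\sum_{\alpha\in\Sigma}\sum_{p=0}^{m_\alpha-1}\frac{\mathcal D^\alpha_{[p]}}{(z-z_\alpha)^{p+1}}$ and $\mathcal H(z)=\frac12\int_{\mathbb D}dx\,\kappa\big(\Gamma(z,x),\Gamma(z,x)\big)-\varphi(z)\mathcal P(z)$. Then, as a rational function of $z$, $\mathcal H(z)$ has at each $z_\alpha$ a pole of order at most $m_\alpha$.
   Context: $\mathfrak g$: finite-dimensional simple complex Lie algebra, $\kappa$: minus its Killing form, $C_{12}=I_a\otimes I^a$ for dual bases w.r.t. $\kappa$; $\mathfrak g_0$: real form, fixed points of an antilinear involution $\tau$. $\mathbb D$ is $\mathbb R$ or the circle; $\delta'_{xy}=\partial_x\delta(x-y)$. Data: a finite set of sites $\Sigma=\Sigma_r\sqcup\Sigma_c\sqcup\bar\Sigma_c$ (real sites, complex sites, their conjugates $\bar\alpha$), multiplicities $m_\alpha\ge1$ ($m_{\bar\alpha}=m_\alpha$), levels $\ell^\alpha_{[p]}$, $0\le p\le m_\alpha-1$ (real for real sites, $\ell^{\bar\alpha}_{[p]}=\overline{\ell^\alpha_{[p]}}$), with $\ell^\alpha_{[m_\alpha-1]}\neq0$; pairwise distinct positions $z_\alpha$ (real for real sites, $z_{\bar\alpha}=\overline{z_\alpha}$); a real $\ell^\infty\neq0$. A realisation is a Poisson algebra $\mathcal A$ of local observables of a field theory on $\mathbb D$ containing $\mathfrak g$-valued fields $\mathcal J^\alpha_{[p]}(x)$ with $\{\mathcal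 J^\alpha_{[p]}{}_1(x),\mathcal J^\beta_{[q]}{}_2(y)\}=\delta_{\alpha\beta}([C_{12},\mathcal J^\alpha_{[p+q]}{}_1(x)]\delta_{xy}-\ell^\alpha_{[p+q]}C_{12}\delta'_{xy})$ if $p+q<m_\alpha$ and $0$ otherwise, with reality conditions $\tau(\mathcal J^\alpha_{[p]})=\mathcal J^\alpha_{[p]}$ (real $\alpha$), $\tau(\mathcal J^\alpha_{[p]})=\mathcal J^{\bar\alpha}_{[p]}$ (complex $\alpha$). Twist function $\varphi(z)=\sum_{\alpha\in\Sigma}\sum_{p=0}^{m_\alpha-1}\frac{\ell^\alpha_{[p]}}{(z-z_\alpha)^{p+1}}-\ell^\infty$; Gaudin Lax matrix $\Gamma(z,x)=\sum_\alpha\sum_p\frac{\mathcal J^\alpha_{[p]}(x)}{(z-z_\alpha)^{p+1}}$. For each $\alpha$, $\eta^\alpha_{[p]}$ ($0\le p\le 2m_\alpha-2$) denotes the unique solution of $\sum_{p=0}^{m_\alpha-1-r}\eta^\alpha_{[p+q]}\ell^\alpha_{[p+r]}=\delta_{q,r}$ for all $q,r\in\{0,\dots,m_\alpha-1\}$, and $\mathcal D^\alpha_{[p]}=\frac12\sum_{q,r=0,\,q+r\ge p}^{m_\alpha-1}\eta^\alpha_{[q+r-p]}\int_{\mathbb D}dx\,\kappa(\mathcal J^\alpha_{[q]}(x),\mathcal J^\alpha_{[r]}(x))$ (generalised Segal-Sugawara integrals). *)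

theory Defs
  imports "HOL-Analysis.Analysis"
begin

definition lie_br :: "('n::finite \<Rightarrow> 'n \<Rightarrow> 'n \<Rightarrow> complex) \<Rightarrow> complex^'n \<Rightarrow> complex^'n \<Rightarrow> complex^'n" where
  "lie_br c x y = (\<chi> k. \<Sum>i\<in>UNIV. \<Sum>j\<in>UNIV. c i j k * x$i * y$j)"

definition is_lie_algebra :: "('n::finite \<Rightarrow> 'n \<Rightarrow> 'n \<Rightarrow> complex) \<Rightarrow> bool" where
  "is_lie_algebra c \<longleftrightarrow> (\<forall>x. lie_br c x x = 0) \<and>
     (\<forall>x y w. lie_br c x (lie_br c y w) + lie_br c y (lie_br c w x) + lie_br c w (lie_br c x y) = 0)"

definition is_cideal :: "('n::finite \<Rightarrow> 'n \<Rightarrow> 'n \<Rightarrow> complex) \<Rightarrow> (complex^'n) set \<Rightarrow> bool" where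
  "is_cideal c I \<longleftrightarrow> 0 \<in> I \<and> (\<forall>x\<in>I. \<forall>y\<in>I. x + y \<in> I) \<and> (\<forall>a. \<forall>x\<in>I. a *s x \<in> I)
     \<and> (\<forall>x. \<forall>y\<in>I. lie_br c x y \<in> I)"

definition is_simple_lie :: "('n::finite \<Rightarrow> 'n \<Rightarrow> 'n \<Rightarrow> complex) \<Rightarrow> bool" where
  "is_simple_lie c \<longleftrightarrow> is_lie_algebra c \<and> (\<exists>x y. lie_br c x y \<noteq> 0) \<and>
     (\<forall>I. is_cideal c I \<longrightarrow> I = {0} \<or> I = UNIV)"

text \<open>Matrix of ad x: (ad x)_{k l} = [x, e_l]_k.\<close>
definition ad_mat :: "('n::finite \<Rightarrow> 'n \<Rightarrow> 'n \<Rightarrow> complex) \<Rightarrow> complex^'n \<Rightarrow> complex^'n^'n" where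
  "ad_mat c x = (\<chi> k l. \<Sum>i\<in>UNIV. x$i * c i l k)"

definition kappa :: "('n::finite \<Rightarrow> 'n \<Rightarrow> 'n \<Rightarrow> complex) \<Rightarrow> complex^'n \<Rightarrow> complex^'n \<Rightarrow> complex" where
  "kappa c x y = - trace (ad_mat c x ** ad_mat c y)"

definition is_real_form_inv :: "('n::finite \<Rightarrow> 'n \<Rightarrow> 'n \<Rightarrow> complex) \<Rightarrow> (complex^'n \<Rightarrow> complex^'n) \<Rightarrow> bool" where
  "is_real_form_inv c \<tau> \<longleftrightarrow> (\<forall>x. \<tau> (\<tau> x) = x) \<and> (\<forall>x y. \<tau> (x + y) = \<tau> x + \<tau> y)
     \<and> (\<forall>a x. \<tau> (a *s x) = cnj a *s \<tau> x) \<and> (\<forall>x y. \<tau> (lie_br c x y) = lie_br c (\<tau> x) (\<tau> y))"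

definition is_eta :: "(nat \<Rightarrow> complex) \<Rightarrow> nat \<Rightarrow> (nat \<Rightarrow> complex) \<Rightarrow> bool" where
  "is_eta l m \<eta> \<longleftrightarrow> (\<forall>q<m. \<forall>r<m. (\<Sum>p=0..m-1-r. \<eta> (p+q) * l (p+r)) = (if q = r then 1 else 0))"

definition intk :: "real measure \<Rightarrow> (complex^'n \<Rightarrow> complex^'n \<Rightarrow> complex)
    \<Rightarrow> (real \<Rightarrow> complex^'n) \<Rightarrow> (real \<Rightarrow> complex^'n) \<Rightarrow> complex" where
  "intk M k f g = (LINT x|M. k (f x) (g x))"

definition gaudin_lax :: "'s set \<Rightarrow> ('s \<Rightarrow> nat) \<Rightarrow> ('s \<Rightarrow> complex) \<Rightarrow> ('s \<Rightarrow> nat \<Rightarrow> real \<Rightarrow> complex^'n)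
    \<Rightarrow> complex \<Rightarrow> real \<Rightarrow> complex^'n" where
  "gaudin_lax S m z J w x = (\<Sum>\<alpha>\<in>S. \<Sum>p<m \<alpha>. (1 / (w - z \<alpha>)^(p+1)) *s J \<alpha> p x)"

definition twist :: "'s set \<Rightarrow> ('s \<Rightarrow> nat) \<Rightarrow> ('s \<Rightarrow> complex) \<Rightarrow> ('s \<Rightarrow> nat \<Rightarrow> complex) \<Rightarrow> real
    \<Rightarrow> complex \<Rightarrow> complex" where
  "twist S m z l linf w = (\<Sum>\<alpha>\<in>S. \<Sum>p<m \<alpha>. l \<alpha> p / (w - z \<alpha>)^(p+1)) - of_real linf"

definition SS_D :: "real measure \<Rightarrow> (complex^'n \<Rightarrow> complex^'n \<Rightarrow> complex) \<Rightarrow> ('s \<Rightarrow> nat)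
    \<Rightarrow> ('s \<Rightarrow> nat \<Rightarrow> complex) \<Rightarrow> ('s \<Rightarrow> nat \<Rightarrow> real \<Rightarrow> complex^'n) \<Rightarrow> 's \<Rightarrow> nat \<Rightarrow> complex" where
  "SS_D M k m \<eta> J \<alpha> p = 1/2 * (\<Sum>q<m \<alpha>. \<Sum>r<m \<alpha>.
      if p \<le> q + r then \<eta> \<alpha> (q + r - p) * intk M k (J \<alpha> q) (J \<alpha> r) else 0)"

definition SS_P :: "real measure \<Rightarrow> (complex^'n \<Rightarrow> complex^'n \<Rightarrow> complex) \<Rightarrow> 's set \<Rightarrow> ('s \<Rightarrow> nat)
    \<Rightarrow> ('s \<Rightarrow> complex) \<Rightarrow> ('s \<Rightarrow> nat \<Rightarrow> complex) \<Rightarrow> ('s \<Rightarrow> nat \<Rightarrow> real \<Rightarrow> complex^'n) \<Rightarrow> complex \<Rightarrow> complex" where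
  "SS_P M k S m z \<eta> J w = (\<Sum>\<alpha>\<in>S. \<Sum>p<m \<alpha>. SS_D M k m \<eta> J \<alpha> p / (w - z \<alpha>)^(p+1))"

definition ham_H :: "real measure \<Rightarrow> (complex^'n \<Rightarrow> complex^'n \<Rightarrow> complex) \<Rightarrow> 's set \<Rightarrow> ('s \<Rightarrow> nat)
    \<Rightarrow> ('s \<Rightarrow> complex) \<Rightarrow> ('s \<Rightarrow> nat \<Rightarrow> complex) \<Rightarrow> real \<Rightarrow> ('s \<Rightarrow> nat \<Rightarrow> complex)
    \<Rightarrow> ('s \<Rightarrow> nat \<Rightarrow> real \<Rightarrow> complex^'n) \<Rightarrow> complex \<Rightarrow> complex" where
  "ham_H M k S m z l linf \<eta> J w =
     1/2 * intk M k (gaudin_lax S m z J w) (gaudin_lax S m z J w)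
     - twist S m z l linf w * SS_P M k S m z \<eta> J w"

end

theory Submission
  imports Defs
begin

text \<open>Expand \<open>H\<close> into products of partial fractions \<open>(w - z\<^sub>\<beta>)\<^sup>-\<^sup>p\<^sup>-\<^sup>1\<close>. Near \<open>z\<^sub>\<alpha>\<close>, every product
  with at most one factor centred at \<open>z\<^sub>\<alpha>\<close> has a pole of order at most \<open>m\<^sub>\<alpha>\<close>. In the remaining
  block, the coefficient of \<open>(w - z\<^sub>\<alpha>)\<^sup>-\<^sup>N\<^sup>-\<^sup>2\<close> is the sum over \<open>p + q = N\<close> of
  \<open>\<integral>\<kappa>(J\<^sub>p, J\<^sub>q)/2 - \<ell>\<^sub>p D\<^sub>q\<close>. Since \<open>\<eta>\<close> inverts the triangular Toeplitz system of the levels \<open>\<ell>\<close>,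
  the Segal-Sugawara integrals \<open>D\<close> are exactly such that this coefficient vanishes for \<open>N \<ge> m\<^sub>\<alpha> - 1\<close>.\<close>

definition pole_order_le :: "complex \<Rightarrow> nat \<Rightarrow> (complex \<Rightarrow> complex) \<Rightarrow> bool" where
  "pole_order_le z0 n f \<longleftrightarrow> (\<exists>a. ((\<lambda>w. (w - z0)^n * f w) \<longlongrightarrow> a) (at z0))"

lemma pole_order_le_const: "pole_order_le z0 0 (\<lambda>w. a)"
  unfolding pole_order_le_def by auto

lemma pole_order_le_add:
  "pole_order_le z0 n f \<Longrightarrow> pole_order_le z0 n g \<Longrightarrow> pole_order_le z0 n (\<lambda>w. f w + g w)"
  unfolding pole_order_le_def by (auto simp: distrib_left intro: tendsto_add)

lemma pole_order_le_sum:
  "(\<And>i. i \<in> I \<Longrightarrow> pole_order_le z0 n (f i)) \<Longrightarrow> pole_order_le z0 n (\<lambda>w. \<Sum>i\<in>I. f i w)"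
proof (induction I rule: infinite_finite_induct)
  case (insert i I)
  then show ?case by (simp add: pole_order_le_add)
qed (auto simp: pole_order_le_def)

lemma pole_order_le_mult:
  assumes "pole_order_le z0 m f" "pole_order_le z0 n g"
  shows "pole_order_le z0 (m + n) (\<lambda>w. f w * g w)"
proof -
  obtain a b where "((\<lambda>w. (w - z0)^m * f w) \<longlongrightarrow> a) (at z0)" "((\<lambda>w. (w - z0)^n * g w) \<longlongrightarrow> b) (at z0)"
    using assms unfolding pole_order_le_def by blast
  then have "((\<lambda>w. ((w - z0)^m * f w) * ((w - z0)^n * g w)) \<longlongrightarrow> a * b) (at z0)"
    by (rule tendsto_mult)
  then show ?thesis
    unfolding pole_order_le_def by (auto simp: power_add mult_ac)
qed

lemma pole_order_le_cmult: "pole_order_le z0 n f \<Longrightarrow> pole_order_le z0 n (\<lambda>w. a * f w)"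
  using pole_order_le_mult[OF pole_order_le_const] by fastforce

lemma pole_order_le_mono:
  assumes "pole_order_le z0 m f" "m \<le> n"
  shows "pole_order_le z0 n f"
proof -
  obtain a where "((\<lambda>w. (w - z0)^m * f w) \<longlongrightarrow> a) (at z0)"
    using assms(1) unfolding pole_order_le_def by blast
  then have "((\<lambda>w. (w - z0)^(n - m) * ((w - z0)^m * f w)) \<longlongrightarrow> (z0 - z0)^(n - m) * a) (at z0)"
    by (intro tendsto_intros)
  moreover have "(w - z0)^(n - m) * ((w - z0)^m * f w) = (w - z0)^n * f w" for w
    using assms(2) by (simp add: mult.assoc power_add[symmetric])
  ultimately show ?thesis
    unfolding pole_order_le_def by auto
qed

definition partial_fraction :: "complex \<Rightarrow> nat \<Rightarrow> complex \<Rightarrow> complex" where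
  "partial_fraction z0 p w = 1 / (w - z0)^(p + 1)"

lemma pole_order_le_partial_fraction: "pole_order_le z0 (p + 1) (partial_fraction z0 p)"
proof -
  have "\<forall>\<^sub>F w in at z0. 1 = (w - z0)^(p + 1) * partial_fraction z0 p w"
    by (auto simp: eventually_at_filter partial_fraction_def)
  then have "((\<lambda>w. (w - z0)^(p + 1) * partial_fraction z0 p w) \<longlongrightarrow> 1) (at z0)"
    by (rule Lim_transform_eventually[OF tendsto_const])
  then show ?thesis unfolding pole_order_le_def by blast
qed

lemma pole_order_le_partial_fraction_regular:
  "z1 \<noteq> z0 \<Longrightarrow> pole_order_le z0 0 (partial_fraction z1 p)"
  unfolding pole_order_le_def partial_fraction_def
  by (rule exI[of _ "1 / (z0 - z1)^(p + 1)"]) (auto intro!: tendsto_intros)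

lemma pole_order_le_partial_fraction_at:
  assumes "inj_on z S" "\<alpha> \<in> S" "\<beta> \<in> S"
  shows "pole_order_le (z \<alpha>) (if \<beta> = \<alpha> then p + 1 else 0) (partial_fraction (z \<beta>) p)"
proof (cases "\<beta> = \<alpha>")
  case False
  then have "z \<beta> \<noteq> z \<alpha>" using assms by (auto dest: inj_onD)
  with False show ?thesis by (simp add: pole_order_le_partial_fraction_regular)
qed (use pole_order_le_partial_fraction[of "z \<alpha>" p] in simp)

lemma pole_order_le_partial_fraction_site:
  assumes "inj_on z S" "\<alpha> \<in> S" "\<beta> \<in> S" "p < m \<beta>"
  shows "pole_order_le (z \<alpha>) (m \<alpha>) (partial_fraction (z \<beta>) p)"
  by (rule pole_order_le_mono[OF pole_order_le_partial_fraction_at[OF assms(1-3)]]) (use assms(4) in auto)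

lemma pole_order_le_partial_fraction_product:
  assumes "inj_on z S" "\<alpha> \<in> S" "\<beta> \<in> S" "\<gamma> \<in> S" "p < m \<beta>" "q < m \<gamma>" "\<beta> \<noteq> \<alpha> \<or> \<gamma> \<noteq> \<alpha>"
  shows "pole_order_le (z \<alpha>) (m \<alpha>) (\<lambda>w. partial_fraction (z \<beta>) p w * partial_fraction (z \<gamma>) q w)"
  by (rule pole_order_le_mono[OF pole_order_le_mult[OF
        pole_order_le_partial_fraction_at[OF assms(1-3)] pole_order_le_partial_fraction_at[OF assms(1,2,4)]]])
    (use assms(5-7) in auto)

lemma sum_sum_collect_antidiagonal:
  fixes a :: "nat \<Rightarrow> nat \<Rightarrow> 'a::comm_semiring_0"
  shows "(\<Sum>p<m. \<Sum>q<m. a p q * x (p + q))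
       = (\<Sum>N<2*m. (\<Sum>p<m. \<Sum>q<m. if p + q = N then a p q else 0) * x N)"
proof -
  have "(\<Sum>N<2*m. (\<Sum>p<m. \<Sum>q<m. if p + q = N then a p q else 0) * x N)
      = (\<Sum>N<2*m. \<Sum>p<m. \<Sum>q<m. if N = p + q then a p q * x N else 0)"
    by (auto simp: sum_distrib_right intro!: sum.cong)
  also have "\<dots> = (\<Sum>p<m. \<Sum>q<m. \<Sum>N<2*m. if N = p + q then a p q * x N else 0)"
    by (simp add: sum.swap[of _ "{..<2*m}"] sum.swap[of _ "{..<m}" "{..<2*m}"])
  also have "\<dots> = (\<Sum>p<m. \<Sum>q<m. a p q * x (p + q))"
    by (intro sum.cong refl) (auto simp: sum.delta)
  finally show ?thesis ..
qed

lemma pole_order_le_double_pole_sum: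
  fixes a :: "nat \<Rightarrow> nat \<Rightarrow> complex"
  assumes antidiagonal_zero: "\<And>N. m - 1 \<le> N \<Longrightarrow> (\<Sum>p<m. \<Sum>q<m. if p + q = N then a p q else 0) = 0"
  shows "pole_order_le z0 m
           (\<lambda>w. \<Sum>p<m. \<Sum>q<m. a p q * (partial_fraction z0 p w * partial_fraction z0 q w))"
proof -
  define coeff where "coeff N = (\<Sum>p<m. \<Sum>q<m. if p + q = N then a p q else 0)" for N
  have "(\<Sum>p<m. \<Sum>q<m. a p q * (partial_fraction z0 p w * partial_fraction z0 q w))
      = (\<Sum>N<m - 1. coeff N * partial_fraction z0 (N + 1) w)" for w
  proof -
    \<comment> \<open>valid also at \<open>w = z0\<close>, where both sides are \<open>0\<close> since \<open>x / 0 = 0\<close>\<close>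
    have "partial_fraction z0 p w * partial_fraction z0 q w = partial_fraction z0 (p + q + 1) w" for p q
      by (simp add: partial_fraction_def power_add)
    then have "(\<Sum>p<m. \<Sum>q<m. a p q * (partial_fraction z0 p w * partial_fraction z0 q w))
        = (\<Sum>N<2*m. coeff N * partial_fraction z0 (N + 1) w)"
      unfolding coeff_def using sum_sum_collect_antidiagonal[where x="\<lambda>N. partial_fraction z0 (N + 1) w"]
      by simp
    also have "\<dots> = (\<Sum>N<m - 1. coeff N * partial_fraction z0 (N + 1) w)"
      by (rule sum.mono_neutral_right) (auto simp: coeff_def antidiagonal_zero)
    finally show ?thesis .
  qed
  moreover have "pole_order_le z0 m (\<lambda>w. \<Sum>N<m - 1. coeff N * partial_fraction z0 (N + 1) w)"
    by (intro pole_order_le_sum pole_order_le_cmult pole_order_le_mono[OF pole_order_le_partial_fraction]) auto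
  ultimately show ?thesis by simp
qed

lemma pole_order_le_double_sum_off_block:
  assumes "finite I" "A \<subseteq> I"
    and block: "pole_order_le z0 n (\<lambda>w. \<Sum>i\<in>A. \<Sum>j\<in>A. F i j w)"
    and off_block: "\<And>i j. i \<in> I \<Longrightarrow> j \<in> I \<Longrightarrow> i \<notin> A \<or> j \<notin> A \<Longrightarrow> pole_order_le z0 n (F i j)"
  shows "pole_order_le z0 n (\<lambda>w. \<Sum>i\<in>I. \<Sum>j\<in>I. F i j w)"
proof -
  have "(\<Sum>i\<in>I. \<Sum>j\<in>I. F i j w) = (\<Sum>(i, j)\<in>I \<times> I - A \<times> A. F i j w) + (\<Sum>i\<in>A. \<Sum>j\<in>A. F i j w)" for w
    using assms(1,2) finite_subset[OF assms(2,1)]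
    by (simp add: sum.cartesian_product sum.subset_diff[of "A \<times> A" "I \<times> I"] Sigma_mono)
  moreover have "pole_order_le z0 n (\<lambda>w. \<Sum>(i, j)\<in>I \<times> I - A \<times> A. F i j w)"
    by (rule pole_order_le_sum) (auto simp: split_def intro!: off_block)
  ultimately show ?thesis
    using pole_order_le_add[OF _ block] by simp
qed

lemma is_eta_convolution:
  assumes eta: "is_eta l m \<eta>" and "1 \<le> m" "m - 1 \<le> N" "T \<le> 2*m - 2"
  shows "(\<Sum>s<m. if s \<le> N \<and> N - s < m \<and> s \<le> T then l (N - s) * \<eta> (T - s) else 0)
         = (if T = N then 1 else 0)"
proof -
  define k where "k = min T (m - 1)"
  show ?thesis
  proof (cases "N - k < m")
    case False
    then have "\<forall>s<m. \<not> (s \<le> N \<and> N - s < m \<and> s \<le> T)" and "T \<noteq> N"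
      using assms(2-4) unfolding k_def by auto
    then show ?thesis by (intro trans[OF sum.neutral]) auto
  next
    case True
    define r where "r = N - k"
    define q where "q = T - k"
    have "r < m" "q < m"
      using True assms(2,4) unfolding r_def q_def k_def by auto
    then have eta_qr: "(\<Sum>p=0..m-1-r. \<eta> (p + q) * l (p + r)) = (if q = r then 1 else 0)"
      using eta unfolding is_eta_def by blast
    have "(\<Sum>s<m. if s \<le> N \<and> N - s < m \<and> s \<le> T then l (N - s) * \<eta> (T - s) else 0)
        = (\<Sum>s\<in>{s\<in>{..<m}. s \<le> N \<and> N - s < m \<and> s \<le> T}. l (N - s) * \<eta> (T - s))"
      by (rule sum.inter_filter[symmetric]) simp
    also have "{s\<in>{..<m}. s \<le> N \<and> N - s < m \<and> s \<le> T} = {N + 1 - m..k}"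
      using assms(2,3) unfolding k_def by auto
    \<comment> \<open>substituting \<open>s = k - p\<close> gives the defining system of \<open>\<eta>\<close>\<close>
    also have "(\<Sum>s\<in>{N + 1 - m..k}. l (N - s) * \<eta> (T - s)) = (\<Sum>p=0..m-1-r. \<eta> (p + q) * l (p + r))"
      by (rule sum.reindex_bij_witness[where i="\<lambda>p. k - p" and j="\<lambda>s. k - s"])
        (use assms(2,3) \<open>r < m\<close> in \<open>auto simp: r_def q_def k_def min_def\<close>)
    finally show ?thesis
      using eta_qr assms(3) unfolding q_def r_def k_def by auto
  qed
qed

lemma sum_if_add_eq:
  "(\<Sum>p<m. if p + s = (N::nat) then f p else 0) = (if s \<le> N \<and> N - s < m then f (N - s) else (0::'a::comm_monoid_add))"
proof -
  have "(\<Sum>p<m. if p + s = N then f p else 0) = (\<Sum>p<m. if p = N - s then (if s \<le> N then f p else 0) else 0)"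
    by (rule sum.cong) auto
  then show ?thesis by (simp add: sum.delta)
qed

lemma segal_sugawara_antidiagonal_cancel:
  fixes K :: "nat \<Rightarrow> nat \<Rightarrow> complex"
  assumes eta: "is_eta l m \<eta>" and m: "1 \<le> m" and N: "m - 1 \<le> N"
    and D: "\<And>s. D s = 1/2 * (\<Sum>q<m. \<Sum>r<m. if s \<le> q + r then \<eta> (q + r - s) * K q r else 0)"
  shows "(\<Sum>p<m. \<Sum>q<m. if p + q = N then K p q / 2 - l p * D q else 0) = 0"
proof -
  have "(\<Sum>p<m. \<Sum>s<m. if p + s = N then l p * D s else 0)
      = (\<Sum>s<m. if s \<le> N \<and> N - s < m then l (N - s) * D s else 0)"
    by (subst sum.swap) (simp add: sum_if_add_eq)
  also have "\<dots> = (\<Sum>s<m. \<Sum>q<m. \<Sum>r<m. 1/2 * K q r *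
        (if s \<le> N \<and> N - s < m \<and> s \<le> q + r then l (N - s) * \<eta> (q + r - s) else 0))"
    by (rule sum.cong[OF refl]) (auto simp: D sum_distrib_left sum_distrib_right mult_ac intro!: sum.cong)
  also have "\<dots> = (\<Sum>q<m. \<Sum>r<m. 1/2 * K q r *
        (\<Sum>s<m. if s \<le> N \<and> N - s < m \<and> s \<le> q + r then l (N - s) * \<eta> (q + r - s) else 0))"
    by (simp only: sum_distrib_left) (subst sum.swap, rule sum.cong[OF refl], rule sum.swap)
  also have "\<dots> = (\<Sum>q<m. \<Sum>r<m. if q + r = N then K q r / 2 else 0)"
    using is_eta_convolution[OF eta m N] by (intro sum.cong refl) auto
  finally have cross: "(\<Sum>p<m. \<Sum>s<m. if p + s = N then l p * D s else 0)
      = (\<Sum>q<m. \<Sum>r<m. if q + r = N then K q r / 2 else 0)" .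
  have "(\<Sum>p<m. \<Sum>q<m. if p + q = N then K p q / 2 - l p * D q else 0)
      = (\<Sum>q<m. \<Sum>r<m. if q + r = N then K q r / 2 else 0)
        - (\<Sum>p<m. \<Sum>s<m. if p + s = N then l p * D s else 0)"
    by (simp only: sum_subtractf[symmetric]) (intro sum.cong refl, simp)
  with cross show ?thesis by simp
qed

lemma pole_order_le_site_block:
  assumes "is_eta (l \<alpha>) (m \<alpha>) (\<eta> \<alpha>)" "1 \<le> m \<alpha>"
  shows "pole_order_le z0 (m \<alpha>) (\<lambda>w. \<Sum>p<m \<alpha>. \<Sum>q<m \<alpha>.
           (intk M k (J \<alpha> p) (J \<alpha> q) / 2 - l \<alpha> p * SS_D M k m \<eta> J \<alpha> q)
           * (partial_fraction z0 p w * partial_fraction z0 q w))"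
  by (intro pole_order_le_double_pole_sum segal_sugawara_antidiagonal_cancel[OF assms])
    (simp_all add: SS_D_def)

lemma kappa_add_left: "kappa c (x + y) w = kappa c x w + kappa c y w"
  unfolding kappa_def trace_def matrix_matrix_mult_def ad_mat_def
  by (simp add: distrib_right sum.distrib sum_negf)

lemma kappa_add_right: "kappa c w (x + y) = kappa c w x + kappa c w y"
  unfolding kappa_def trace_def matrix_matrix_mult_def ad_mat_def
  by (simp add: distrib_right distrib_left sum.distrib sum_negf)

lemma kappa_scale_left: "kappa c (a *s x) w = a * kappa c x w"
  unfolding kappa_def trace_def matrix_matrix_mult_def ad_mat_def
  by (simp add: sum_distrib_left sum_distrib_right mult_ac sum_negf)

lemma kappa_scale_right: "kappa c w (a *s x) = a * kappa c w x"
  unfolding kappa_def trace_def matrix_matrix_mult_def ad_mat_def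
  by (simp add: sum_distrib_left sum_distrib_right mult_ac sum_negf)

lemma kappa_sum_left: "kappa c (\<Sum>i\<in>I. f i) w = (\<Sum>i\<in>I. kappa c (f i) w)"
  by (induction I rule: infinite_finite_induct)
    (auto simp: kappa_add_left kappa_scale_left[of c 0 0, simplified])

lemma kappa_sum_right: "kappa c w (\<Sum>i\<in>I. f i) = (\<Sum>i\<in>I. kappa c w (f i))"
  by (induction I rule: infinite_finite_induct)
    (auto simp: kappa_add_right kappa_scale_right[of c _ 0 0, simplified])

lemma intk_kappa_sum_sum:
  assumes "\<And>i j. i \<in> I \<Longrightarrow> j \<in> I' \<Longrightarrow> integrable M (\<lambda>x. kappa c (f i x) (g j x))"
  shows "intk M (kappa c) (\<lambda>x. \<Sum>i\<in>I. a i *s f i x) (\<lambda>x. \<Sum>j\<in>I'. b j *s g j x)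
       = (\<Sum>i\<in>I. \<Sum>j\<in>I'. a i * b j * intk M (kappa c) (f i) (g j))"
proof -
  have "kappa c (\<Sum>i\<in>I. a i *s f i x) (\<Sum>j\<in>I'. b j *s g j x)
      = (\<Sum>i\<in>I. \<Sum>j\<in>I'. a i * b j * kappa c (f i x) (g j x))" for x
    by (simp add: kappa_sum_left kappa_sum_right kappa_scale_left kappa_scale_right
        sum_distrib_left mult_ac sum.swap[of _ I'])
  then show ?thesis
    unfolding intk_def using assms by (simp add: integrable_sum integrable_mult_right)
qed

lemma ham_H_expansion:
  assumes fin: "finite S"
    and J_int: "\<forall>\<alpha>\<in>S. \<forall>\<beta>\<in>S. \<forall>p<m \<alpha>. \<forall>q<m \<beta>. integrable M (\<lambda>x. kappa c (J \<alpha> p x) (J \<beta> q x))"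
  shows "ham_H M (kappa c) S m z l linf \<eta> J w =
      (\<Sum>(\<beta>, p)\<in>(SIGMA \<beta>:S. {..<m \<beta>}). \<Sum>(\<gamma>, q)\<in>(SIGMA \<beta>:S. {..<m \<beta>}).
          (intk M (kappa c) (J \<beta> p) (J \<gamma> q) / 2 - l \<beta> p * SS_D M (kappa c) m \<eta> J \<gamma> q)
          * (partial_fraction (z \<beta>) p w * partial_fraction (z \<gamma>) q w))
      + of_real linf * (\<Sum>(\<gamma>, q)\<in>(SIGMA \<beta>:S. {..<m \<beta>}).
          SS_D M (kappa c) m \<eta> J \<gamma> q * partial_fraction (z \<gamma>) q w)"
proof -
  define I where "I = (SIGMA \<beta>:S. {..<m \<beta>})"
  define e where "e = (\<lambda>(\<beta>, p). partial_fraction (z \<beta>) p w)"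
  define F where "F = (\<lambda>(\<beta>, p). J \<beta> p)"
  define K where "K = (\<lambda>i j. intk M (kappa c) (F i) (F j))"
  define L where "L = (\<lambda>(\<beta>, p). l \<beta> p)"
  define D where "D = (\<lambda>(\<gamma>, q). SS_D M (kappa c) m \<eta> J \<gamma> q)"
  have lax: "gaudin_lax S m z J w = (\<lambda>x. \<Sum>i\<in>I. e i *s F i x)"
    unfolding gaudin_lax_def I_def e_def F_def partial_fraction_def
    using fin by (simp add: sum.Sigma split_def)
  have intk_lax: "intk M (kappa c) (gaudin_lax S m z J w) (gaudin_lax S m z J w)
      = (\<Sum>i\<in>I. \<Sum>j\<in>I. e i * e j * K i j)"
    unfolding lax K_def
    by (rule intk_kappa_sum_sum) (use J_int in \<open>auto simp: I_def F_def\<close>)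
  have twist: "twist S m z l linf w = (\<Sum>i\<in>I. L i * e i) - of_real linf"
    unfolding twist_def I_def L_def e_def partial_fraction_def using fin by (simp add: sum.Sigma split_def)
  have SS_P: "SS_P M (kappa c) S m z \<eta> J w = (\<Sum>j\<in>I. D j * e j)"
    unfolding SS_P_def I_def D_def e_def partial_fraction_def using fin by (simp add: sum.Sigma split_def)
  have "ham_H M (kappa c) S m z l linf \<eta> J w
      = (\<Sum>i\<in>I. \<Sum>j\<in>I. K i j / 2 * (e i * e j))
        - ((\<Sum>i\<in>I. \<Sum>j\<in>I. L i * D j * (e i * e j)) - of_real linf * (\<Sum>j\<in>I. D j * e j))"
    unfolding ham_H_def intk_lax twist SS_P left_diff_distrib sum_product
    by (simp add: sum_distrib_left mult_ac)
  also have "\<dots> = (\<Sum>i\<in>I. \<Sum>j\<in>I. (K i j / 2 - L i * D j) * (e i * e j))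
      + of_real linf * (\<Sum>j\<in>I. D j * e j)"
    by (simp add: left_diff_distrib sum_subtractf)
  finally have "ham_H M (kappa c) S m z l linf \<eta> J w
      = (\<Sum>i\<in>I. \<Sum>j\<in>I. (K i j / 2 - L i * D j) * (e i * e j)) + of_real linf * (\<Sum>j\<in>I. D j * e j)" .
  then show ?thesis
    unfolding I_def e_def K_def L_def D_def F_def by (simp add: split_def)
qed

lemma pole_order_le_ham_H_quadratic_part:
  assumes fin: "finite S" and z_inj: "inj_on z S" and \<alpha>: "\<alpha> \<in> S"
    and eta: "is_eta (l \<alpha>) (m \<alpha>) (\<eta> \<alpha>)" and m_pos: "1 \<le> m \<alpha>"
  shows "pole_order_le (z \<alpha>) (m \<alpha>)
      (\<lambda>w. \<Sum>(\<beta>, p)\<in>(SIGMA \<beta>:S. {..<m \<beta>}). \<Sum>(\<gamma>, q)\<in>(SIGMA \<beta>:S. {..<m \<beta>}).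
          (intk M k (J \<beta> p) (J \<gamma> q) / 2 - l \<beta> p * SS_D M k m \<eta> J \<gamma> q)
          * (partial_fraction (z \<beta>) p w * partial_fraction (z \<gamma>) q w))"
proof -
  define I where "I = (SIGMA \<beta>:S. {..<m \<beta>})"
  define F where "F = (\<lambda>(\<beta>, p) (\<gamma>, q) w.
      (intk M k (J \<beta> p) (J \<gamma> q) / 2 - l \<beta> p * SS_D M k m \<eta> J \<gamma> q)
      * (partial_fraction (z \<beta>) p w * partial_fraction (z \<gamma>) q w))"
  have "pole_order_le (z \<alpha>) (m \<alpha>) (\<lambda>w. \<Sum>i\<in>I. \<Sum>j\<in>I. F i j w)"
  proof (rule pole_order_le_double_sum_off_block)
    show "finite I" "Pair \<alpha> ` {..<m \<alpha>} \<subseteq> I"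
      using fin \<alpha> by (auto simp: I_def)
    have "(\<Sum>i\<in>Pair \<alpha> ` {..<m \<alpha>}. \<Sum>j\<in>Pair \<alpha> ` {..<m \<alpha>}. F i j w)
        = (\<Sum>p<m \<alpha>. \<Sum>q<m \<alpha>. F (\<alpha>, p) (\<alpha>, q) w)" for w
      by (simp add: sum.reindex inj_on_def)
    then show "pole_order_le (z \<alpha>) (m \<alpha>)
        (\<lambda>w. \<Sum>i\<in>Pair \<alpha> ` {..<m \<alpha>}. \<Sum>j\<in>Pair \<alpha> ` {..<m \<alpha>}. F i j w)"
      using pole_order_le_site_block[of l \<alpha> m \<eta> "z \<alpha>"] eta m_pos by (simp add: F_def)
  next
    fix i j assume "i \<in> I" "j \<in> I" and off: "i \<notin> Pair \<alpha> ` {..<m \<alpha>} \<or> j \<notin> Pair \<alpha> ` {..<m \<alpha>}"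
    then obtain \<beta> p \<gamma> q where ij: "i = (\<beta>, p)" "j = (\<gamma>, q)"
      and "\<beta> \<in> S" "\<gamma> \<in> S" "p < m \<beta>" "q < m \<gamma>"
      by (auto simp: I_def)
    moreover from off this have "\<beta> \<noteq> \<alpha> \<or> \<gamma> \<noteq> \<alpha>" by auto
    ultimately show "pole_order_le (z \<alpha>) (m \<alpha>) (F i j)"
      unfolding F_def ij
      by (simp add: pole_order_le_cmult pole_order_le_partial_fraction_product[OF z_inj \<alpha>])
  qed
  then show ?thesis
    unfolding I_def F_def by (simp add: split_def)
qed

theorem propositionA1:
  fixes c :: "'n::finite \<Rightarrow> 'n \<Rightarrow> 'n \<Rightarrow> complex"
    and \<tau> :: "complex^'n \<Rightarrow> complex^'n"
    and S :: "'s set" and cj :: "'s \<Rightarrow> 's"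
    and m :: "'s \<Rightarrow> nat" and l :: "'s \<Rightarrow> nat \<Rightarrow> complex" and linf :: real
    and z :: "'s \<Rightarrow> complex" and \<eta> :: "'s \<Rightarrow> nat \<Rightarrow> complex"
    and J :: "'s \<Rightarrow> nat \<Rightarrow> real \<Rightarrow> complex^'n"
    and M :: "real measure"
  assumes simple: "is_simple_lie c"
    and realform: "is_real_form_inv c \<tau>"
    and fin: "finite S"
    and cj_in: "\<forall>\<alpha>\<in>S. cj \<alpha> \<in> S" and cj_inv: "\<forall>\<alpha>\<in>S. cj (cj \<alpha>) = \<alpha>"
    and m_pos: "\<forall>\<alpha>\<in>S. 1 \<le> m \<alpha>" and m_cj: "\<forall>\<alpha>\<in>S. m (cj \<alpha>) = m \<alpha>"
    and l_cj: "\<forall>\<alpha>\<in>S. \<forall>p<m \<alpha>. l (cj \<alpha>) p = cnj (l \<alpha> p)"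
    and l_top: "\<forall>\<alpha>\<in>S. l \<alpha> (m \<alpha> - 1) \<noteq> 0"
    and z_cj: "\<forall>\<alpha>\<in>S. z (cj \<alpha>) = cnj (z \<alpha>)"
    and z_inj: "inj_on z S"
    and linf_nz: "linf \<noteq> 0"
    and eta: "\<forall>\<alpha>\<in>S. is_eta (l \<alpha>) (m \<alpha>) (\<eta> \<alpha>)"
    and domain: "M = lborel \<or> (\<exists>L>0. M = restrict_space lborel {0..<L})"
    and J_real: "\<forall>\<alpha>\<in>S. \<forall>p<m \<alpha>. \<forall>x. \<tau> (J \<alpha> p x) = J (cj \<alpha>) p x"
    and J_int: "\<forall>\<alpha>\<in>S. \<forall>\<beta>\<in>S. \<forall>p<m \<alpha>. \<forall>q<m \<beta>.
                  integrable M (\<lambda>x. kappa c (J \<alpha> p x) (J \<beta> q x))"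
  shows "\<forall>\<alpha>\<in>S. \<exists>a. ((\<lambda>w. (w - z \<alpha>)^(m \<alpha>) * ham_H M (kappa c) S m z l linf \<eta> J w)
                    \<longlongrightarrow> a) (at (z \<alpha>))"
proof
  fix \<alpha> assume \<alpha>: "\<alpha> \<in> S"
  have quadratic: "pole_order_le (z \<alpha>) (m \<alpha>)
      (\<lambda>w. \<Sum>(\<beta>, p)\<in>(SIGMA \<beta>:S. {..<m \<beta>}). \<Sum>(\<gamma>, q)\<in>(SIGMA \<beta>:S. {..<m \<beta>}).
          (intk M (kappa c) (J \<beta> p) (J \<gamma> q) / 2 - l \<beta> p * SS_D M (kappa c) m \<eta> J \<gamma> q)
          * (partial_fraction (z \<beta>) p w * partial_fraction (z \<gamma>) q w))"
    using \<alpha> eta m_pos by (intro pole_order_le_ham_H_quadratic_part[OF fin z_inj]) auto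
  have linear: "pole_order_le (z \<alpha>) (m \<alpha>) (\<lambda>w. of_real linf * (\<Sum>(\<gamma>, q)\<in>(SIGMA \<beta>:S. {..<m \<beta>}).
      SS_D M (kappa c) m \<eta> J \<gamma> q * partial_fraction (z \<gamma>) q w))"
    using pole_order_le_partial_fraction_site[OF z_inj \<alpha>]
    by (auto simp: split_def intro!: pole_order_le_cmult pole_order_le_sum)
  from pole_order_le_add[OF quadratic linear]
  show "\<exists>a. ((\<lambda>w. (w - z \<alpha>)^(m \<alpha>) * ham_H M (kappa c) S m z l linf \<eta> J w) \<longlongrightarrow> a) (at (z \<alpha>))"
    unfolding pole_order_le_def ham_H_expansion[OF fin J_int] .
qed

end
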